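(* Let $q$ be a prime power, $m$ and $g$ positive integers, and let $p_1(x),\dots,p_g(x)\in\mathbb{F}_q[x]$ be polynomials of degree $m$ with $\gcd(p_i,p_j)=1$ for all $1\le i\ne j\le g$. For $1\le i\le g$ let $V_i=\{f(x)/p_i(x):\ f\in\mathbb{F}_q[x],\ \deg f\le m-1\}$. Let $Q(x)\in\mathbb{F}_q[x]$ be an irreducible polynomial coprime with every $p_i(x)$, and for a rational function $u\in V_i$ let $u(Q)$ denote the residue class of $u$ in $\mathbb{F}_q[x]/(Q(x))\cong\mathbb{F}_{q^{\deg Q}}$. Let $T\subseteq\{1,\dots,g\}$ with $|T|\le \deg(Q)/m$. If $g_i\in V_i$ ($i\in T$) satisfy $\sum_{i\in T} g_i(Q)=0$, then $g_i=0$ for all $i\in T$.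
   Context: The residue class $u(Q)$ of $u=f/p_i$ is well defined since $p_i$ is invertible modulo the irreducible polynomial $Q$ coprime to it. *)

theory Defs
  imports Complex_Main "HOL-Computational_Algebra.Polynomial_Factorial"
begin

text \<open>Residue class of the rational function f/p in F[x]/(Q), for p invertible mod Q:
  the unique reduced representative r (r mod Q = r) with r * p congruent to f modulo Q.\<close>
definition frac_res :: "'a::field poly \<Rightarrow> 'a poly \<Rightarrow> 'a poly \<Rightarrow> 'a poly" where
  "frac_res Q f p = (THE r. r mod Q = r \<and> Q dvd (r * p - f))"

end

(*
  Clearing denominators, the hypothesis says that Q divides the polynomial
  N = (\<Sum>i\<in>T. f i * (\<Prod>j\<in>T-{i}. p j)), whose degree is below m * card T \<le> degree Q;
  hence N = 0. Then p i divides f i * (\<Prod>j\<in>T-{i}. p j), hence f i by pairwise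
  coprimality, and degree (f i) < degree (p i) forces f i = 0.
*)
theory Submission
  imports Defs
begin

(* Bezout's identity is only available for euclidean_ring_gcd, which 'a poly is not
   for an arbitrary field 'a. *)
lemma coprime_imp_bezout:
  fixes a b :: "'a::euclidean_ring"
  assumes "coprime a b"
  obtains u v where "u * a + v * b = 1"
  using assms
proof (induction b arbitrary: a thesis rule: measure_induct_rule[where f = euclidean_size])
  case (less b a)
  show ?case
  proof (cases "b = 0")
    case True
    with less.prems(2) have "is_unit a"
      by simp
    then obtain w where "1 = a * w" ..
    then show ?thesis
      by (intro less.prems(1)[of w 0]) (simp add: mult.commute)
  next
    case False
    with less.prems(2) have "coprime b (a mod b)"
      by (simp add: coprime_commute)
    then obtain u v where uv: "u * b + v * (a mod b) = 1"
      using less.IH False mod_size_less by blast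
    have "v * a + (u - v * (a div b)) * b = u * b + v * (a mod b)"
      by (simp add: minus_div_mult_eq_mod [symmetric] algebra_simps)
    then show ?thesis
      using uv less.prems(1) by simp
  qed
qed

lemma coprime_dvd_mult_cancel:
  fixes a b c :: "'a::euclidean_ring"
  assumes "coprime a c" and "a dvd b * c"
  shows "a dvd b"
proof -
  obtain u v where "u * a + v * c = 1"
    using assms(1) by (rule coprime_imp_bezout)
  then have "b = b * (u * a + v * c)"
    by simp
  also have "\<dots> = (b * u) * a + v * (b * c)"
    by (simp add: algebra_simps)
  also have "a dvd \<dots>"
    using assms(2) by simp
  finally show ?thesis .
qed

lemma coprime_dvd_mult_prod_cancel:
  fixes a b :: "'a::euclidean_ring"
  assumes "\<forall>i\<in>A. coprime a (f i)" and "a dvd b * (\<Prod>i\<in>A. f i)"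
  shows "a dvd b"
  using assms
proof (induction A arbitrary: b rule: infinite_finite_induct)
  case (insert i A)
  have "a dvd (b * f i) * (\<Prod>i\<in>A. f i)"
    using insert.prems(2) insert.hyps by (simp add: mult.assoc)
  then have "a dvd b * f i"
    using insert.IH insert.prems(1) by blast
  then show ?case
    using insert.prems(1) coprime_dvd_mult_cancel by blast
qed simp_all

lemma frac_res_eqI:
  fixes Q p f r :: "'a::field poly"
  assumes "coprime Q p" and "r mod Q = r" and "Q dvd r * p - f"
  shows "frac_res Q f p = r"
  unfolding frac_res_def
proof (rule the_equality)
  fix r'
  assume r': "r' mod Q = r' \<and> Q dvd r' * p - f"
  have "(r' * p - f) - (r * p - f) = (r' - r) * p"
    by (simp add: algebra_simps)
  then have "Q dvd (r' - r) * p"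
    using dvd_diff[OF conjunct2[OF r'] assms(3)] by simp
  then have "Q dvd r' - r"
    using assms(1) by (rule coprime_dvd_mult_cancel[rotated])
  then have "r' mod Q = r mod Q"
    by (simp only: mod_eq_dvd_iff)
  with r' assms(2) show "r' = r"
    by metis
qed (use assms in simp)

lemma frac_res_dvd:
  fixes Q p f :: "'a::field poly"
  assumes "coprime Q p"
  shows "Q dvd frac_res Q f p * p - f"
proof -
  from assms have "coprime p Q"
    by (simp add: coprime_commute)
  then obtain u v where bezout: "u * p + v * Q = 1"
    by (rule coprime_imp_bezout)
  define r where "r = (f * u) mod Q"
  have "f * (u * p) = f * (u * p + v * Q) - (f * v) * Q"
    by (simp add: algebra_simps)
  with bezout have "f * (u * p) = f - (f * v) * Q"
    by simp
  then have "(r * p) mod Q = (f - (f * v) * Q) mod Q"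
    by (simp add: r_def mod_mult_left_eq mult.assoc)
  also have "\<dots> = f mod Q"
    by (simp add: mod_eq_dvd_iff)
  finally have "Q dvd r * p - f"
    by (simp add: mod_eq_dvd_iff)
  moreover have "frac_res Q f p = r"
    using frac_res_eqI[OF assms _ calculation] by (simp add: r_def)
  ultimately show ?thesis
    by simp
qed

definition fraction_sum_numerator :: "'i set \<Rightarrow> ('i \<Rightarrow> 'a::comm_semiring_1) \<Rightarrow> ('i \<Rightarrow> 'a) \<Rightarrow> 'a" where
  "fraction_sum_numerator T f p = (\<Sum>i\<in>T. f i * (\<Prod>j\<in>T - {i}. p j))"

lemma sum_frac_res_mult_prod_cong_numerator:
  fixes Q :: "'a::field poly" and f p :: "'i \<Rightarrow> 'a poly"
  assumes "finite T" and "\<forall>i\<in>T. coprime Q (p i)"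
  shows "Q dvd (\<Sum>i\<in>T. frac_res Q (f i) (p i)) * (\<Prod>i\<in>T. p i) - fraction_sum_numerator T f p"
proof -
  have "(\<Sum>i\<in>T. frac_res Q (f i) (p i)) * (\<Prod>i\<in>T. p i) - fraction_sum_numerator T f p
      = (\<Sum>i\<in>T. (frac_res Q (f i) (p i) * p i - f i) * (\<Prod>j\<in>T - {i}. p j))"
    unfolding fraction_sum_numerator_def sum_distrib_right sum_subtractf [symmetric]
  proof (rule sum.cong)
    fix i
    assume "i \<in> T"
    then have "(\<Prod>i\<in>T. p i) = p i * (\<Prod>j\<in>T - {i}. p j)"
      using assms(1) by (simp add: prod.remove)
    then show "frac_res Q (f i) (p i) * (\<Prod>i\<in>T. p i) - f i * (\<Prod>j\<in>T - {i}. p j)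
        = (frac_res Q (f i) (p i) * p i - f i) * (\<Prod>j\<in>T - {i}. p j)"
      by (simp add: algebra_simps)
  qed simp
  also have "Q dvd \<dots>"
    using assms(2) by (intro dvd_sum dvd_mult2 frac_res_dvd) simp
  finally show ?thesis .
qed

lemma degree_fraction_sum_numerator_less:
  fixes f p :: "'i \<Rightarrow> 'a::idom poly"
  assumes "finite T" and "T \<noteq> {}" and "\<forall>i\<in>T. degree (f i) < degree (p i)"
  shows "degree (fraction_sum_numerator T f p) < degree (\<Prod>i\<in>T. p i)"
proof -
  have p_nonzero: "p i \<noteq> 0" if "i \<in> T" for i
    using assms(3) that by fastforce
  have term_less: "degree (f i * (\<Prod>j\<in>T - {i}. p j)) < degree (\<Prod>i\<in>T. p i)" if "i \<in> T" for i
  proof -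
    have cofactor: "(\<Prod>j\<in>T - {i}. p j) \<noteq> 0"
      using p_nonzero by (simp add: assms(1))
    have "(\<Prod>i\<in>T. p i) = p i * (\<Prod>j\<in>T - {i}. p j)"
      using assms(1) that by (simp add: prod.remove)
    then have "degree (\<Prod>i\<in>T. p i) = degree (p i) + degree (\<Prod>j\<in>T - {i}. p j)"
      using p_nonzero[OF that] cofactor by (simp add: degree_mult_eq)
    moreover have "degree (f i * (\<Prod>j\<in>T - {i}. p j)) \<le> degree (f i) + degree (\<Prod>j\<in>T - {i}. p j)"
      by (rule degree_mult_le)
    ultimately show ?thesis
      using assms(3) that by fastforce
  qed
  obtain i where "i \<in> T"
    using assms(2) by blast
  then have "degree (\<Prod>i\<in>T. p i) > 0"
    using term_less by fastforce
  with term_less show ?thesis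
    unfolding fraction_sum_numerator_def by (rule degree_sum_less)
qed

lemma fraction_sum_numerator_eq_0_imp_eq_0:
  fixes f p :: "'i \<Rightarrow> 'a::field poly"
  assumes "finite T" and "\<forall>i\<in>T. \<forall>j\<in>T. i \<noteq> j \<longrightarrow> coprime (p i) (p j)"
    and "\<forall>i\<in>T. degree (f i) < degree (p i)" and "fraction_sum_numerator T f p = 0"
    and "i \<in> T"
  shows "f i = 0"
proof -
  define cofactor where "cofactor j = (\<Prod>k\<in>T - {j}. p k)" for j
  have "p i dvd f j * cofactor j" if "j \<in> T - {i}" for j
  proof -
    have "p i dvd cofactor j"
      unfolding cofactor_def using that assms(1,5) by (intro dvd_prodI) auto
    then show ?thesis
      by (rule dvd_mult)
  qed
  then have "p i dvd (\<Sum>j\<in>T - {i}. f j * cofactor j)"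
    by (rule dvd_sum)
  moreover have "fraction_sum_numerator T f p = f i * cofactor i + (\<Sum>j\<in>T - {i}. f j * cofactor j)"
    unfolding fraction_sum_numerator_def cofactor_def by (rule sum.remove[OF assms(1,5)])
  then have "f i * cofactor i = - (\<Sum>j\<in>T - {i}. f j * cofactor j)"
    using assms(4) by (simp only: eq_neg_iff_add_eq_0)
  ultimately have "p i dvd f i * cofactor i"
    by (simp only: dvd_minus_iff)
  moreover have "\<forall>j\<in>T - {i}. coprime (p i) (p j)"
  proof
    fix j
    assume "j \<in> T - {i}"
    with assms(2,5) show "coprime (p i) (p j)"
      by auto
  qed
  ultimately have "p i dvd f i"
    unfolding cofactor_def using coprime_dvd_mult_prod_cancel by blast
  show ?thesis
  proof (rule ccontr)
    assume "f i \<noteq> 0"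
    with \<open>p i dvd f i\<close> have "degree (p i) \<le> degree (f i)"
      by (rule dvd_imp_degree_le)
    with assms(3,5) show False
      by fastforce
  qed
qed

lemma fraction_sum_numerator_eq_0_if_dvd:
  fixes Q :: "'a::idom poly" and f p :: "'i \<Rightarrow> 'a poly"
  assumes "finite T" and "\<forall>i\<in>T. degree (f i) < degree (p i)"
    and "degree (\<Prod>i\<in>T. p i) \<le> degree Q" and "Q dvd fraction_sum_numerator T f p"
  shows "fraction_sum_numerator T f p = 0"
proof (cases "T = {}")
  case False
  have "degree (fraction_sum_numerator T f p) < degree (\<Prod>i\<in>T. p i)"
    using assms(1) False assms(2) by (rule degree_fraction_sum_numerator_less)
  with assms(3) have less: "degree (fraction_sum_numerator T f p) < degree Q"
    by linarith
  show ?thesis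
  proof (rule ccontr)
    assume "fraction_sum_numerator T f p \<noteq> 0"
    with assms(4) have "degree Q \<le> degree (fraction_sum_numerator T f p)"
      by (rule dvd_imp_degree_le)
    with less show False
      by linarith
  qed
qed (simp add: fraction_sum_numerator_def)

theorem lemma3p1:
  fixes p f :: "nat \<Rightarrow> 'a::{finite,field} poly" and Q :: "'a poly"
    and m g :: nat and T :: "nat set"
  assumes "m > 0" and "g > 0"
    and "\<forall>i\<in>{1..g}. degree (p i) = m"
    and "\<forall>i\<in>{1..g}. \<forall>j\<in>{1..g}. i \<noteq> j \<longrightarrow> coprime (p i) (p j)"
    and "irreducible Q"
    and "\<forall>i\<in>{1..g}. coprime Q (p i)"
    and "T \<subseteq> {1..g}"
    and "real (card T) \<le> real (degree Q) / real m"
    and "\<forall>i\<in>T. degree (f i) \<le> m - 1"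
    and "(\<Sum>i\<in>T. frac_res Q (f i) (p i)) mod Q = 0"
  shows "\<forall>i\<in>T. f i = 0"
proof -
  have finite: "finite T"
    using assms(7) by (rule finite_subset) simp
  have degree_p: "degree (p i) = m" if "i \<in> T" for i
    using assms(3,7) that by blast
  have degree_less: "\<forall>i\<in>T. degree (f i) < degree (p i)"
    using assms(1,9) degree_p by (auto simp: less_eq_Suc_le)
  have "degree (\<Prod>i\<in>T. p i) = (\<Sum>i\<in>T. degree (p i))"
    using assms(1) degree_p by (intro degree_prod_eq_sum_degree) fastforce
  also have "\<dots> = m * card T"
    by (simp add: degree_p)
  also have "\<dots> \<le> degree Q"
    using assms(1,8) by (simp add: pos_le_divide_eq mult.commute flip: of_nat_mult)
  finally have degree_prod: "degree (\<Prod>i\<in>T. p i) \<le> degree Q" .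
  have "Q dvd (\<Sum>i\<in>T. frac_res Q (f i) (p i)) * (\<Prod>i\<in>T. p i)"
    using assms(10) by (simp add: mod_eq_0_iff_dvd)
  moreover have "Q dvd (\<Sum>i\<in>T. frac_res Q (f i) (p i)) * (\<Prod>i\<in>T. p i) - fraction_sum_numerator T f p"
    using assms(6,7) by (intro sum_frac_res_mult_prod_cong_numerator finite) blast
  ultimately have "Q dvd fraction_sum_numerator T f p"
    by (metis dvd_diff_right_iff)
  with finite degree_less degree_prod have numerator_eq_0: "fraction_sum_numerator T f p = 0"
    by (rule fraction_sum_numerator_eq_0_if_dvd)
  have pairwise_coprime: "\<forall>i\<in>T. \<forall>j\<in>T. i \<noteq> j \<longrightarrow> coprime (p i) (p j)"
    using assms(4,7) by blast
  show ?thesis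
    using fraction_sum_numerator_eq_0_imp_eq_0[OF finite pairwise_coprime degree_less numerator_eq_0]
    by blast
qed

end
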